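(* For every integer $m\ge1$, as formal power series (or entire functions) in $z$, $$\sum_{n\ge0}\frac{(m+n-1)!}{(2m+n-1)!}\,\frac{z^n}{n!}=\frac{1}{z^{2m-1}}\sum_{k=0}^{m-1}(-1)^k\binom{m+k-1}{2k}2^k(2k-1)!!\,z^{m-1-k}\big(e^z+(-1)^{m+k}\big),$$ where $(2k-1)!!=1\cdot3\cdots(2k-1)$ and $(-1)!!=1$. *)

theory Defs
  imports Complex_Main
begin

text \<open>Odd double factorial: odd_dfact k = (2k-1)!! = 1*3*...*(2k-1), with odd_dfact 0 = (-1)!! = 1.\<close>
definition odd_dfact :: "nat \<Rightarrow> nat" where
  "odd_dfact k = (\<Prod>i=1..k. 2*i - 1)"

end

theory Submission imports Defs "HOL-Computational_Algebra.Formal_Power_Series" begin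

(* Write m = p + 1 and let a(p,i) = (-1)^(p-i) (2p-i)! / (i! (p-i)!) be the
   coefficients of the (signed, reversed) Bessel polynomial, so that the right-hand side
   of the theorem is z^-(2p+1) * (\<Sum>i\<le>p. a(p,i) z^i (e^z - (-1)^i)).
   Expanding z^i e^z = \<Sum>N z^N / (N-i)!, the coefficient of z^N in the bracket is
     \<Sum>i\<le>min p N. a(p,i) / (N-i)!  -  [N \<le> p] a(p,N) (-1)^N.
   Multiplying by N!, the first sum becomes a Vandermonde convolution of generalised
   binomial coefficients and equals p! * binom(N-p-1, p).  For N > p this is the
   ordinary binomial coefficient, vanishing unless N \<ge> 2p+1; for N \<le> p it is cancelled
   exactly by the correction term.  Hence the bracket is the power series
   \<Sum>_{N \<ge> 2p+1} (N-p-1)! / (N! (N-2p-1)!) z^N, and dividing by z^(2p+1) gives the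
   left-hand side. *)

text \<open>The coefficient a(p,i) of z^i; the theorem's k-th summand corresponds to i = p - k.\<close>
definition bessel_coeff :: "nat \<Rightarrow> nat \<Rightarrow> 'a :: field_char_0" where
  "bessel_coeff p i = (-1)^(p-i) * fact (2*p-i) / (fact i * fact (p-i))"

text \<open>Up to the factor i!/p!, a(p,i) is a generalised binomial coefficient with negative
  upper argument; this is what makes the Vandermonde convolution applicable.\<close>
lemma bessel_coeff_gchoose:
  assumes "i \<le> p"
  shows "bessel_coeff p i * fact i = fact p * ((- of_nat p - 1 :: 'a :: field_char_0) gchoose (p-i))"
proof -
  have "((- of_nat p - 1 :: 'a) gchoose (p-i)) = (-(of_nat p + 1)) gchoose (p-i)" by simp
  also have "\<dots> = (-1)^(p-i) * ((of_nat p + 1 + of_nat (p-i) - 1) gchoose (p-i))"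
    by (rule gbinomial_minus)
  also have "(of_nat p + 1 + of_nat (p-i) - 1 :: 'a) = of_nat (2*p-i)" using assms by simp
  also have "(of_nat (2*p-i) gchoose (p-i) :: 'a) = of_nat ((2*p-i) choose (p-i))"
    by (simp add: binomial_gbinomial)
  also have "\<dots> = fact (2*p-i) / (fact (p-i) * fact p)"
    using assms by (subst binomial_fact) (auto intro!: arg_cong[where f=fact])
  finally show ?thesis unfolding bessel_coeff_def by (simp add: field_simps)
qed

lemma falling_fact_gchoose:
  "(if i \<le> N then fact N / fact (N-i) else 0) = fact i * ((of_nat N :: 'a :: field_char_0) gchoose i)"
  by (cases "i \<le> N") (simp_all add: binomial_gbinomial[symmetric] binomial_fact field_simps)

lemma bessel_convolution:
  "(\<Sum>i=0..p. bessel_coeff p i * (if i \<le> N then fact N / fact (N-i) else 0))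
     = fact p * ((of_nat N - of_nat p - 1 :: 'a :: field_char_0) gchoose p)"
proof -
  have "(\<Sum>i=0..p. bessel_coeff p i * (if i \<le> N then fact N / fact (N-i) else 0))
      = (\<Sum>i=0..p. (bessel_coeff p i * fact i) * ((of_nat N :: 'a) gchoose i))"
    by (simp add: falling_fact_gchoose mult.assoc)
  also have "\<dots> = (\<Sum>i=0..p. fact p * (((of_nat N :: 'a) gchoose i) * ((- of_nat p - 1) gchoose (p-i))))"
    by (rule sum.cong) (simp_all add: bessel_coeff_gchoose)
  also have "\<dots> = fact p * (\<Sum>i=0..p. ((of_nat N :: 'a) gchoose i) * ((- of_nat p - 1) gchoose (p-i)))"
    by (simp add: sum_distrib_left)
  also have "\<dots> = fact p * ((of_nat N + (- of_nat p - 1)) gchoose p)"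
    by (simp only: gbinomial_Vandermonde)
  also have "of_nat N + (- of_nat p - 1) = (of_nat N - of_nat p - 1 :: 'a)" by simp
  finally show ?thesis .
qed

lemma gchoose_shift_large:
  assumes "p < N"
  shows "fact p * ((of_nat N - of_nat p - 1 :: 'a :: field_char_0) gchoose p)
           = (if 2*p+1 \<le> N then fact (N-p-1) / fact (N-2*p-1) else 0)"
proof -
  have "(of_nat N - of_nat p - 1 :: 'a) = of_nat (N-p-1)" using assms by (simp add: of_nat_diff)
  then have g: "((of_nat N - of_nat p - 1 :: 'a) gchoose p) = of_nat ((N-p-1) choose p)"
    by (simp add: binomial_gbinomial)
  show ?thesis
  proof (cases "2*p+1 \<le> N")
    case True
    have "(of_nat ((N-p-1) choose p) :: 'a) = fact (N-p-1) / (fact p * fact (N-2*p-1))"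
      using True by (subst binomial_fact) (auto intro!: arg_cong[where f=fact])
    then show ?thesis using True g by simp
  next
    case False
    then show ?thesis using assms g by simp
  qed
qed

lemma gchoose_shift_small:
  assumes "N \<le> p"
  shows "fact p * ((of_nat N - of_nat p - 1 :: 'a :: field_char_0) gchoose p)
           = fact N * (bessel_coeff p N * (-1)^N)"
proof -
  have "(of_nat N - of_nat p - 1 :: 'a) = - of_nat (p+1-N)" using assms by (simp add: of_nat_diff)
  then have "((of_nat N - of_nat p - 1 :: 'a) gchoose p)
        = (-1)^p * ((of_nat (p+1-N) + of_nat p - 1) gchoose p)"
    by (simp add: gbinomial_minus)
  also have "(of_nat (p+1-N) + of_nat p - 1 :: 'a) = of_nat (2*p-N)" using assms by (simp add: of_nat_diff)
  also have "(of_nat (2*p-N) gchoose p :: 'a) = of_nat ((2*p-N) choose p)" by (simp add: binomial_gbinomial)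
  also have "\<dots> = fact (2*p-N) / (fact p * fact (p-N))"
    using assms by (subst binomial_fact) (auto intro!: arg_cong[where f=fact])
  finally have g: "((of_nat N - of_nat p - 1 :: 'a) gchoose p) = (-1)^p * (fact (2*p-N) / (fact p * fact (p-N)))" .
  have sign: "(-1::'a)^(p-N) * (-1)^N = (-1)^p" using assms by (simp add: power_add[symmetric])
  show ?thesis unfolding g bessel_coeff_def using sign by (simp add: field_simps)
qed

text \<open>The coefficient of z^N in \<Sum>i\<le>p. a(p,i) z^i (e^z - (-1)^i).\<close>
lemma bessel_exp_coeff:
  "(\<Sum>i=0..p. bessel_coeff p i * (if i \<le> N then 1 / fact (N-i) else 0))
     - (if N \<le> p then bessel_coeff p N * (-1)^N else 0)
   = (if 2*p+1 \<le> N then fact (N-p-1) / (fact N * fact (N-2*p-1)) else (0 :: 'a :: field_char_0))"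
proof -
  have conv: "fact N * (\<Sum>i=0..p. bessel_coeff p i * (if i \<le> N then 1 / fact (N-i) else 0))
     = fact p * ((of_nat N - of_nat p - 1 :: 'a) gchoose p)"
    unfolding bessel_convolution[symmetric] sum_distrib_left by (rule sum.cong) auto
  have "fact N * ((\<Sum>i=0..p. bessel_coeff p i * (if i \<le> N then 1 / fact (N-i) else 0))
     - (if N \<le> p then bessel_coeff p N * (-1)^N else 0))
   = fact N * (if 2*p+1 \<le> N then fact (N-p-1) / (fact N * fact (N-2*p-1)) else (0 :: 'a))"
    unfolding right_diff_distrib conv
    using gchoose_shift_large[of p N, where 'a='a] gchoose_shift_small[of N p, where 'a='a]
    by (cases "p < N") auto
  then show ?thesis by simp
qed

lemma odd_dfact_fact: "odd_dfact k * 2^k * fact k = fact (2*k)"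
proof (induction k)
  case 0 then show ?case by (simp add: odd_dfact_def)
next
  case (Suc k)
  have o: "odd_dfact (Suc k) = odd_dfact k * (2*k+1)"
    unfolding odd_dfact_def by (simp add: prod.cl_ivl_Suc)
  have "fact (2 * Suc k) = (2*k+2) * ((2*k+1) * (fact (2*k) :: nat))"
    by (simp add: algebra_simps)
  also have "\<dots> = (2*k+2) * ((2*k+1) * (odd_dfact k * 2^k * fact k))" using Suc by simp
  also have "\<dots> = odd_dfact (Suc k) * 2^Suc k * fact (Suc k)" unfolding o by (simp add: algebra_simps)
  finally show ?case by simp
qed

lemma theorem_coeff_eq_bessel_coeff:
  assumes "k \<le> p"
  shows "(-1) ^ k * of_nat ((p + k) choose (2*k)) * 2 ^ k * of_nat (odd_dfact k)
           = (bessel_coeff p (p-k) :: 'a :: field_char_0)"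
proof -
  have c: "(of_nat ((p + k) choose (2*k)) :: 'a) = fact (p+k) / (fact (2*k) * fact (p-k))"
    using assms by (subst binomial_fact) (auto intro!: arg_cong[where f=fact])
  have d: "(fact (2*k) :: 'a) = of_nat (odd_dfact k) * 2^k * fact k"
    by (metis odd_dfact_fact of_nat_fact of_nat_mult of_nat_numeral of_nat_power)
  have e: "2*p - (p-k) = p+k" "p - (p-k) = k" using assms by auto
  have "odd_dfact k \<noteq> 0" using odd_dfact_fact[of k] by (metis fact_nonzero mult_eq_0_iff)
  then show ?thesis unfolding bessel_coeff_def e c d by (simp add: field_simps)
qed

lemma theorem_sum_eq_bessel_sum:
  fixes z :: complex
  shows "(\<Sum>k=0..p. (-1) ^ k * of_nat ((p + k) choose (2*k)) * 2 ^ k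
                 * of_nat (odd_dfact k) * z ^ (p - k) * (exp z + (-1) ^ (Suc p + k)))
        = (\<Sum>i=0..p. bessel_coeff p i * z^i * (exp z - (-1)^i))"
proof -
  have "(\<Sum>k=0..p. (-1) ^ k * of_nat ((p + k) choose (2*k)) * 2 ^ k
                 * of_nat (odd_dfact k) * z ^ (p - k) * (exp z + (-1) ^ (Suc p + k)))
      = (\<Sum>i=0..p. (-1) ^ (p-i) * of_nat ((p + (p-i)) choose (2*(p-i))) * 2 ^ (p-i)
                 * of_nat (odd_dfact (p-i)) * z ^ (p - (p-i)) * (exp z + (-1) ^ (Suc p + (p-i))))"
    by (subst sum.atLeastAtMost_rev) simp
  also have "\<dots> = (\<Sum>i=0..p. bessel_coeff p i * z^i * (exp z - (-1)^i))"
  proof (rule sum.cong)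
    fix i assume "i \<in> {0..p}"
    then have i: "i \<le> p" by simp
    then have "(-1::complex)^(Suc p + (p-i)) = - ((-1)^i)" by (simp add: minus_one_power_iff)
    then show "(-1) ^ (p-i) * of_nat ((p + (p-i)) choose (2*(p-i))) * 2 ^ (p-i)
                 * of_nat (odd_dfact (p-i)) * z ^ (p - (p-i)) * (exp z + (-1) ^ (Suc p + (p-i)))
               = bessel_coeff p i * z^i * (exp z - (-1)^i)"
      using i theorem_coeff_eq_bessel_coeff[of "p-i" p, where 'a=complex] by simp
  qed simp
  finally show ?thesis .
qed

lemma exp_times_power_sums:
  fixes z :: "'a :: {real_normed_field, banach}"
  shows "(\<lambda>N. if i \<le> N then z^N / fact (N-i) else 0) sums (z^i * exp z)"
proof -
  define f where "f = (\<lambda>N. if i \<le> N then z^N / fact (N-i) else (0::'a))"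
  have "(\<lambda>n. z^n / fact n) sums exp z"
    using exp_converges[of z] by (simp add: scaleR_conv_of_real divide_inverse mult.commute)
  then have "(\<lambda>n. z^i * (z^n / fact n)) sums (z^i * exp z)" by (rule sums_mult)
  moreover have "(\<lambda>n. f (n+i)) = (\<lambda>n. z^i * (z^n / fact n))"
    by (auto simp: f_def power_add)
  ultimately have "(\<lambda>n. f (n+i)) sums (z^i * exp z)" by simp
  moreover have "(\<Sum>j<i. f j) = 0" by (auto simp: f_def)
  ultimately show ?thesis unfolding f_def[symmetric] by (simp add: sums_iff_shift)
qed

lemma bessel_exp_sums:
  fixes z :: complex
  shows "(\<lambda>N. z^N * (if 2*p+1 \<le> N then fact (N-p-1) / (fact N * fact (N-2*p-1)) else 0))
           sums (\<Sum>i=0..p. bessel_coeff p i * z^i * (exp z - (-1)^i))"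
proof -
  have "(\<lambda>N. \<Sum>i=0..p. bessel_coeff p i * (if i \<le> N then z^N / fact (N-i) else 0)
                   - (if N = i then bessel_coeff p i * (-1)^i * z^N else 0))
        sums (\<Sum>i=0..p. bessel_coeff p i * (z^i * exp z) - bessel_coeff p i * (-1)^i * z^i)"
    by (intro sums_sum sums_diff sums_mult exp_times_power_sums)
       (rule sums_single[where f="\<lambda>N. bessel_coeff p _ * (-1)^_ * z^N"])
  moreover have "(\<Sum>i=0..p. bessel_coeff p i * (if i \<le> N then z^N / fact (N-i) else 0)
                   - (if N = i then bessel_coeff p i * (-1)^i * z^N else 0))
      = z^N * (if 2*p+1 \<le> N then fact (N-p-1) / (fact N * fact (N-2*p-1)) else 0)" for N
  proof -
    have "(\<Sum>i=0..p. bessel_coeff p i * (if i \<le> N then z^N / fact (N-i) else 0)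
                   - (if N = i then bessel_coeff p i * (-1)^i * z^N else 0))
        = z^N * ((\<Sum>i=0..p. bessel_coeff p i * (if i \<le> N then 1 / fact (N-i) else 0))
                 - (if N \<le> p then bessel_coeff p N * (-1)^N else 0))"
      unfolding sum_subtractf right_diff_distrib sum_distrib_left
      by (auto intro!: sum.cong simp: algebra_simps)
    then show ?thesis by (simp only: bessel_exp_coeff)
  qed
  ultimately show ?thesis by (simp add: algebra_simps sum_distrib_left)
qed

theorem mainTheorem17:
  fixes m :: nat and z :: complex
  assumes "m \<ge> 1" and "z \<noteq> 0"
  shows "(\<lambda>n. fact (m + n - 1) / fact (2*m + n - 1) * z ^ n / fact n) sums
           (1 / z ^ (2*m - 1) *
             (\<Sum>k=0..m-1. (-1) ^ k * of_nat ((m + k - 1) choose (2*k)) * 2 ^ k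
                 * of_nat (odd_dfact k) * z ^ (m - 1 - k) * (exp z + (-1) ^ (m + k))))"
proof -
  obtain p where m: "m = Suc p" using assms(1) by (cases m) auto
  define B where "B = (\<Sum>i=0..p. bessel_coeff p i * z^i * (exp z - (-1)^i))"
  define h where "h N = z^N * (if 2*p+1 \<le> N then fact (N-p-1) / (fact N * fact (N-2*p-1)) else 0)" for N
  have "h sums B" unfolding h_def B_def by (rule bessel_exp_sums)
  moreover have "(\<Sum>j<2*p+1. h j) = 0" by (auto simp: h_def)
  ultimately have "(\<lambda>n. h (n + (2*p+1))) sums B" by (simp only: sums_iff_shift add_0_right)
  then have "(\<lambda>n. 1 / z^(2*p+1) * h (n + (2*p+1))) sums (1 / z^(2*p+1) * B)"
    by (rule sums_mult)
  moreover have "1 / z^(2*p+1) * h (n + (2*p+1))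
       = fact (m + n - 1) / fact (2*m + n - 1) * z ^ n / fact n" for n
    using assms(2) by (simp add: h_def m power_add field_simps)
  ultimately show ?thesis
    using theorem_sum_eq_bessel_sum[of p z] by (simp add: m B_def)
qed

end
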